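(* Let $G$ be a finite simple connected graph of order at least $2$ having a minimum dominating set $D$ with $c(D)\neq \emptyset$. Then the Cartesian product $G \,\square\, H$ is not well-dominated for every finite simple connected graph $H$ of order at least $2$.
   Context: For $u\in A\subseteq V(G)$, $\mathrm{pn}[u,A]=\{x\in V(G): N[x]\cap A=\{u\}\}$; for a dominating set $D$, $c(D)=\{x\in D : \mathrm{pn}[x,D]=\{x\}\}$. A graph is well-dominated if every minimal (with respect to inclusion) dominating set is a minimum dominating set. The Cartesian product $G\,\square\, H$ has vertex set $V(G)\times V(H)$, with $(g_1,h_1)$ adjacent to $(g_2,h_2)$ iff either ($g_1=g_2$ and $h_1h_2\in E(H)$) or ($h_1=h_2$ and $g_1g_2\in E(G)$). *)

theory Defs
  imports Main
begin

definition simple_graph :: "'a set \<Rightarrow> ('a \<Rightarrow> 'a \<Rightarrow> bool) \<Rightarrow> bool" where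
  "simple_graph V E \<longleftrightarrow> finite V \<and> (\<forall>x y. E x y \<longrightarrow> x \<in> V \<and> y \<in> V)
     \<and> (\<forall>x y. E x y \<longrightarrow> E y x) \<and> (\<forall>x. \<not> E x x)"

definition connected_graph :: "'a set \<Rightarrow> ('a \<Rightarrow> 'a \<Rightarrow> bool) \<Rightarrow> bool" where
  "connected_graph V E \<longleftrightarrow> V \<noteq> {} \<and> (\<forall>x\<in>V. \<forall>y\<in>V. E\<^sup>*\<^sup>* x y)"

definition closed_nbhd :: "'a set \<Rightarrow> ('a \<Rightarrow> 'a \<Rightarrow> bool) \<Rightarrow> 'a \<Rightarrow> 'a set" where
  "closed_nbhd V E x = insert x {y \<in> V. E x y}"

definition dominating :: "'a set \<Rightarrow> ('a \<Rightarrow> 'a \<Rightarrow> bool) \<Rightarrow> 'a set \<Rightarrow> bool" where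
  "dominating V E D \<longleftrightarrow> D \<subseteq> V \<and> (\<forall>v\<in>V. closed_nbhd V E v \<inter> D \<noteq> {})"

definition minimal_dominating :: "'a set \<Rightarrow> ('a \<Rightarrow> 'a \<Rightarrow> bool) \<Rightarrow> 'a set \<Rightarrow> bool" where
  "minimal_dominating V E D \<longleftrightarrow> dominating V E D \<and> (\<forall>D'. D' \<subset> D \<longrightarrow> \<not> dominating V E D')"

definition minimum_dominating :: "'a set \<Rightarrow> ('a \<Rightarrow> 'a \<Rightarrow> bool) \<Rightarrow> 'a set \<Rightarrow> bool" where
  "minimum_dominating V E D \<longleftrightarrow> dominating V E D \<and> (\<forall>D'. dominating V E D' \<longrightarrow> card D \<le> card D')"

definition well_dominated :: "'a set \<Rightarrow> ('a \<Rightarrow> 'a \<Rightarrow> bool) \<Rightarrow> bool" where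
  "well_dominated V E \<longleftrightarrow> (\<forall>D. minimal_dominating V E D \<longrightarrow> minimum_dominating V E D)"

definition pn :: "'a set \<Rightarrow> ('a \<Rightarrow> 'a \<Rightarrow> bool) \<Rightarrow> 'a \<Rightarrow> 'a set \<Rightarrow> 'a set" where
  "pn V E u A = {x \<in> V. closed_nbhd V E x \<inter> A = {u}}"

definition cD :: "'a set \<Rightarrow> ('a \<Rightarrow> 'a \<Rightarrow> bool) \<Rightarrow> 'a set \<Rightarrow> 'a set" where
  "cD V E D = {x \<in> D. pn V E x D = {x}}"

definition cprod_edges :: "'a set \<Rightarrow> ('a \<Rightarrow> 'a \<Rightarrow> bool) \<Rightarrow> 'b set \<Rightarrow> ('b \<Rightarrow> 'b \<Rightarrow> bool)
    \<Rightarrow> ('a \<times> 'b) \<Rightarrow> ('a \<times> 'b) \<Rightarrow> bool" where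
  "cprod_edges VG EG VH EH p q \<longleftrightarrow> p \<in> VG \<times> VH \<and> q \<in> VG \<times> VH \<and>
     ((fst p = fst q \<and> EH (snd p) (snd q)) \<or> (snd p = snd q \<and> EG (fst p) (fst q)))"

end

theory Submission
  imports Defs
begin

(* By an exchange argument of Bollobas and Cockayne, G has a minimum dominating set B in
   which every vertex has an external private neighbour: among the minimum dominating sets take
   one maximising the number of vertices with a neighbour inside the set; a vertex d without
   external private neighbour has pn[d,B] = {d}, and replacing d by any neighbour of d keeps the
   set minimum dominating while increasing that number.  External private neighbours persist in
   B x V(H), which is therefore a minimal dominating set of the product of size |D| |V(H)|.
   On the other hand, for x in c(D) every vertex other than x is dominated by D - {x}, so
   D x V(H) stays dominating after deleting the single vertex (x, h0), which is dominated by
   (x, h1) for a neighbour h1 of h0. *)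

definition external_private_neighbours :: "'a set \<Rightarrow> ('a \<Rightarrow> 'a \<Rightarrow> bool) \<Rightarrow> 'a set \<Rightarrow> bool" where
  "external_private_neighbours V E D \<longleftrightarrow> (\<forall>d\<in>D. pn V E d D - D \<noteq> {})"

definition nonisolated :: "('a \<Rightarrow> 'a \<Rightarrow> bool) \<Rightarrow> 'a set \<Rightarrow> 'a set" where
  "nonisolated E S = {v \<in> S. \<exists>u\<in>S. E v u}"

lemma closed_nbhd_iff: "u \<in> closed_nbhd V E v \<longleftrightarrow> u = v \<or> (u \<in> V \<and> E v u)"
  by (auto simp: closed_nbhd_def)

lemma pn_inside_eq: "v \<in> pn V E u A \<Longrightarrow> v \<in> A \<Longrightarrow> v = u"
  by (auto simp: pn_def closed_nbhd_def)

lemma dominating_finite: "finite V \<Longrightarrow> dominating V E D \<Longrightarrow> finite D"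
  by (auto simp: dominating_def intro: finite_subset)

lemma connected_graph_has_neighbour:
  assumes "connected_graph V E" and "card V \<ge> 2" and "v \<in> V"
  shows "\<exists>y. E v y"
proof -
  obtain w where "w \<in> V" "w \<noteq> v"
  proof -
    have "card (V - {v}) \<noteq> 0"
      using assms(2,3) by (simp add: card_Diff_singleton_if)
    then have "V - {v} \<noteq> {}"
      by force
    then show ?thesis
      using that by blast
  qed
  have "E\<^sup>*\<^sup>* v w"
    using assms(1,3) \<open>w \<in> V\<close> by (simp add: connected_graph_def)
  then show ?thesis
    using \<open>w \<noteq> v\<close> by (cases rule: converse_rtranclpE) auto
qed

lemma minimal_dominating_iff_pn:
  "minimal_dominating V E D \<longleftrightarrow> dominating V E D \<and> (\<forall>d\<in>D. pn V E d D \<noteq> {})"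
proof
  assume min: "minimal_dominating V E D"
  show "dominating V E D \<and> (\<forall>d\<in>D. pn V E d D \<noteq> {})"
  proof (intro conjI ballI)
    show dom: "dominating V E D"
      using min by (simp add: minimal_dominating_def)
    fix d assume "d \<in> D"
    then have "\<not> dominating V E (D - {d})"
      using min by (auto simp: minimal_dominating_def)
    then obtain v where "v \<in> V" "closed_nbhd V E v \<inter> (D - {d}) = {}"
      using dom by (auto simp: dominating_def)
    moreover have "closed_nbhd V E v \<inter> D \<noteq> {}"
      using dom \<open>v \<in> V\<close> by (simp add: dominating_def)
    ultimately have "v \<in> pn V E d D"
      by (auto simp: pn_def)
    then show "pn V E d D \<noteq> {}"
      by blast
  qed
next
  assume "dominating V E D \<and> (\<forall>d\<in>D. pn V E d D \<noteq> {})"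
  then have dom: "dominating V E D" and pn: "\<And>d. d \<in> D \<Longrightarrow> pn V E d D \<noteq> {}"
    by auto
  show "minimal_dominating V E D"
    unfolding minimal_dominating_def
  proof (intro conjI allI impI dom)
    fix D' assume "D' \<subset> D"
    then obtain d where "d \<in> D" "d \<notin> D'"
      by blast
    then obtain v where "v \<in> V" "closed_nbhd V E v \<inter> D = {d}"
      using pn by (auto simp: pn_def)
    then have "closed_nbhd V E v \<inter> D' = {}"
      using \<open>D' \<subset> D\<close> \<open>d \<notin> D'\<close> by auto
    then show "\<not> dominating V E D'"
      using \<open>v \<in> V\<close> by (auto simp: dominating_def)
  qed
qed

lemma minimum_dominating_imp_minimal:
  assumes "finite V" and "minimum_dominating V E D"
  shows "minimal_dominating V E D"
  unfolding minimal_dominating_def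
proof (intro conjI allI impI)
  show "dominating V E D"
    using assms(2) by (simp add: minimum_dominating_def)
  then have "finite D"
    using assms(1) dominating_finite by blast
  fix D' assume "D' \<subset> D"
  then have "card D' < card D"
    using \<open>finite D\<close> by (simp add: psubset_card_mono)
  then show "\<not> dominating V E D'"
    using assms(2) by (auto simp: minimum_dominating_def)
qed

lemma minimal_dominating_pn_subset_cD:
  assumes "minimal_dominating V E D" and "d \<in> D" and "pn V E d D \<subseteq> D"
  shows "d \<in> cD V E D"
proof -
  have "pn V E d D \<noteq> {}"
    using assms(1,2) by (simp add: minimal_dominating_iff_pn)
  moreover have "pn V E d D \<subseteq> {d}"
    using assms(3) pn_inside_eq by fastforce
  ultimately show ?thesis
    using assms(2) by (auto simp: cD_def)
qed

lemma cD_no_neighbour_inside: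
  assumes "simple_graph V E" and "d \<in> cD V E D" and "E d u"
  shows "u \<notin> D"
proof
  assume "u \<in> D"
  moreover have "u \<in> V" and "u \<noteq> d"
    using assms(1,3) by (auto simp: simple_graph_def)
  ultimately have "u \<in> closed_nbhd V E d \<inter> D"
    using \<open>E d u\<close> by (simp add: closed_nbhd_iff)
  moreover have "closed_nbhd V E d \<inter> D = {d}"
    using assms(2) by (auto simp: cD_def pn_def)
  ultimately show False
    using \<open>u \<noteq> d\<close> by blast
qed

lemma dominating_exchange:
  assumes dom: "dominating V E D" and cD: "d \<in> cD V E D" and "y \<in> V" and "E d y"
  shows "dominating V E (insert y (D - {d}))"
  unfolding dominating_def
proof (intro conjI ballI)
  show "insert y (D - {d}) \<subseteq> V"
    using dom \<open>y \<in> V\<close> by (simp add: dominating_def subset_iff)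
  fix u assume "u \<in> V"
  then obtain e where e: "e \<in> closed_nbhd V E u" "e \<in> D"
    using dom unfolding dominating_def by blast
  consider "e \<noteq> d" | "u = d" | "e = d" "u \<noteq> d"
    by blast
  then show "closed_nbhd V E u \<inter> insert y (D - {d}) \<noteq> {}"
  proof cases
    case 1
    then have "e \<in> closed_nbhd V E u \<inter> insert y (D - {d})"
      using e by simp
    then show ?thesis
      by blast
  next
    case 2
    then have "y \<in> closed_nbhd V E u"
      using \<open>y \<in> V\<close> \<open>E d y\<close> by (simp add: closed_nbhd_iff)
    then show ?thesis
      by simp
  next
    case 3
    have "u \<notin> pn V E d D"
      using cD \<open>u \<noteq> d\<close> by (simp add: cD_def)
    then have "closed_nbhd V E u \<inter> D \<noteq> {d}"
      using \<open>u \<in> V\<close> by (simp add: pn_def)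
    then have "closed_nbhd V E u \<inter> D - {d} \<noteq> {}"
      using e \<open>e = d\<close> by auto
    then show ?thesis
      by auto
  qed
qed

lemma nonisolated_exchange:
  assumes "\<forall>u\<in>D. \<not> E d u \<and> \<not> E u d" and "y \<notin> D" and "z \<in> D - {d}" and "E y z"
  shows "nonisolated E D \<subset> nonisolated E (insert y (D - {d}))"
proof
  show "nonisolated E D \<subseteq> nonisolated E (insert y (D - {d}))"
    using assms(1) unfolding nonisolated_def by fastforce
  have "y \<in> nonisolated E (insert y (D - {d}))"
    using assms(3,4) unfolding nonisolated_def by blast
  moreover have "y \<notin> nonisolated E D"
    using assms(2) by (simp add: nonisolated_def)
  ultimately show "nonisolated E D \<noteq> nonisolated E (insert y (D - {d}))"
    by blast
qed

lemma minimum_dominating_exchange: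
  assumes sg: "simple_graph V E" and min: "minimum_dominating V E D" and cD: "d \<in> cD V E D"
    and "E d y"
  shows "minimum_dominating V E (insert y (D - {d}))"
    and "card (nonisolated E D) < card (nonisolated E (insert y (D - {d})))"
proof -
  have "finite V" and "y \<in> V" and sym: "\<And>u v. E u v \<Longrightarrow> E v u"
    using sg \<open>E d y\<close> by (auto simp: simple_graph_def)
  have dom: "dominating V E D"
    using min by (simp add: minimum_dominating_def)
  then have "finite D"
    using \<open>finite V\<close> dominating_finite by blast
  have "d \<in> D" and pn_d: "pn V E d D = {d}"
    using cD by (auto simp: cD_def)
  have "y \<notin> D" and isolated: "\<forall>u\<in>D. \<not> E d u \<and> \<not> E u d"
    using cD_no_neighbour_inside[OF sg cD] \<open>E d y\<close> sym by blast+
  have "y \<notin> pn V E d D"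
    using pn_d \<open>d \<in> D\<close> \<open>y \<notin> D\<close> by auto
  then have "closed_nbhd V E y \<inter> D \<noteq> {d}"
    using \<open>y \<in> V\<close> by (simp add: pn_def)
  moreover have "d \<in> closed_nbhd V E y \<inter> D"
    using \<open>d \<in> D\<close> dom sym \<open>E d y\<close> by (auto simp: closed_nbhd_iff dominating_def)
  ultimately obtain z where "z \<in> closed_nbhd V E y" "z \<in> D" "z \<noteq> d"
    by blast
  then have "z \<in> D - {d}" and "E y z"
    using \<open>y \<notin> D\<close> by (auto simp: closed_nbhd_iff)
  have "card (insert y (D - {d})) = card D"
    using \<open>finite D\<close> \<open>d \<in> D\<close> \<open>y \<notin> D\<close> card_Suc_Diff1[of D d] by simp
  then show "minimum_dominating V E (insert y (D - {d}))"
    using min dominating_exchange[OF dom cD \<open>y \<in> V\<close> \<open>E d y\<close>]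
    by (simp add: minimum_dominating_def)
  have "finite (nonisolated E (insert y (D - {d})))"
    using \<open>finite D\<close> by (simp add: nonisolated_def)
  then show "card (nonisolated E D) < card (nonisolated E (insert y (D - {d})))"
    using nonisolated_exchange[OF isolated \<open>y \<notin> D\<close> \<open>z \<in> D - {d}\<close> \<open>E y z\<close>]
    by (simp add: psubset_card_mono)
qed

lemma minimum_dominating_external_private_neighbours:
  assumes sg: "simple_graph V E" and no_isolated: "\<forall>v\<in>V. \<exists>y. E v y"
    and "minimum_dominating V E D0"
  shows "\<exists>D. minimum_dominating V E D \<and> external_private_neighbours V E D"
proof -
  have bounded: "card (nonisolated E D) < Suc (card V)" if "minimum_dominating V E D" for D
  proof -
    have "nonisolated E D \<subseteq> V" and "finite V"
      using that sg by (auto simp: nonisolated_def minimum_dominating_def dominating_def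
          simple_graph_def)
    then show ?thesis
      by (simp add: card_mono le_imp_less_Suc)
  qed
  obtain D where min: "minimum_dominating V E D"
    and greatest: "\<And>D'. minimum_dominating V E D' \<Longrightarrow>
      card (nonisolated E D') \<le> card (nonisolated E D)"
    using ex_has_greatest_nat[of "minimum_dominating V E" D0 "\<lambda>D. card (nonisolated E D)"]
      \<open>minimum_dominating V E D0\<close> bounded by blast
  have "pn V E d D - D \<noteq> {}" if "d \<in> D" for d
  proof
    assume "pn V E d D - D = {}"
    then have "d \<in> cD V E D"
      using minimal_dominating_pn_subset_cD minimum_dominating_imp_minimal[OF _ min] sg \<open>d \<in> D\<close>
      by (auto simp: simple_graph_def)
    have "d \<in> V"
      using min \<open>d \<in> D\<close> by (auto simp: minimum_dominating_def dominating_def)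
    then obtain y where "E d y"
      using no_isolated by blast
    from minimum_dominating_exchange[OF sg min \<open>d \<in> cD V E D\<close> this]
    show False
      using greatest by (meson not_le)
  qed
  then show ?thesis
    using min by (auto simp: external_private_neighbours_def)
qed

lemma external_private_neighbours_imp_minimal:
  "dominating V E D \<Longrightarrow> external_private_neighbours V E D \<Longrightarrow> minimal_dominating V E D"
  by (auto simp: minimal_dominating_iff_pn external_private_neighbours_def)

lemma closed_nbhd_cprod:
  assumes "u \<in> VG" and "h \<in> VH"
  shows "closed_nbhd (VG \<times> VH) (cprod_edges VG EG VH EH) (u, h) =
    {u} \<times> closed_nbhd VH EH h \<union> closed_nbhd VG EG u \<times> {h}"
  using assms by (auto simp: closed_nbhd_def cprod_edges_def)

lemma dominating_cprod:
  assumes "dominating VG EG S"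
  shows "dominating (VG \<times> VH) (cprod_edges VG EG VH EH) (S \<times> VH)"
  unfolding dominating_def
proof (intro conjI ballI)
  show "S \<times> VH \<subseteq> VG \<times> VH"
    using assms by (auto simp: dominating_def)
  fix p assume "p \<in> VG \<times> VH"
  then obtain u h where p: "p = (u, h)" "u \<in> VG" "h \<in> VH"
    by blast
  then obtain d where "d \<in> closed_nbhd VG EG u" "d \<in> S"
    using assms unfolding dominating_def by blast
  then have "(d, h) \<in> closed_nbhd (VG \<times> VH) (cprod_edges VG EG VH EH) p \<inter> S \<times> VH"
    using p by (simp add: closed_nbhd_cprod)
  then show "closed_nbhd (VG \<times> VH) (cprod_edges VG EG VH EH) p \<inter> S \<times> VH \<noteq> {}"
    by blast
qed

lemma pn_cprod:
  assumes "w \<in> pn VG EG d S" and "w \<notin> S" and "h \<in> VH"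
  shows "(w, h) \<in> pn (VG \<times> VH) (cprod_edges VG EG VH EH) (d, h) (S \<times> VH)"
proof -
  have "w \<in> VG" and nbhd_w: "closed_nbhd VG EG w \<inter> S = {d}"
    using assms(1) by (auto simp: pn_def)
  then have "closed_nbhd (VG \<times> VH) (cprod_edges VG EG VH EH) (w, h) \<inter> S \<times> VH =
      (closed_nbhd VG EG w \<inter> S) \<times> {h}"
    using assms(2,3) by (auto simp: closed_nbhd_cprod)
  then show ?thesis
    using \<open>w \<in> VG\<close> assms(3) nbhd_w by (simp add: pn_def)
qed

lemma external_private_neighbours_cprod:
  assumes "external_private_neighbours VG EG S"
  shows "external_private_neighbours (VG \<times> VH) (cprod_edges VG EG VH EH) (S \<times> VH)"
  unfolding external_private_neighbours_def
proof
  fix p assume "p \<in> S \<times> VH"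
  then obtain d h where p: "p = (d, h)" "d \<in> S" "h \<in> VH"
    by blast
  then obtain w where "w \<in> pn VG EG d S" "w \<notin> S"
    using assms by (auto simp: external_private_neighbours_def)
  then have "(w, h) \<in> pn (VG \<times> VH) (cprod_edges VG EG VH EH) p (S \<times> VH) - S \<times> VH"
    using p pn_cprod by fastforce
  then show "pn (VG \<times> VH) (cprod_edges VG EG VH EH) p (S \<times> VH) - S \<times> VH \<noteq> {}"
    by blast
qed

lemma dominating_cprod_remove_cD:
  assumes dom: "dominating VG EG D" and "x \<in> cD VG EG D"
    and "simple_graph VH EH" and "EH h0 h1"
  shows "dominating (VG \<times> VH) (cprod_edges VG EG VH EH) (D \<times> VH - {(x, h0)})"
  unfolding dominating_def
proof (intro conjI ballI)
  let ?N = "closed_nbhd (VG \<times> VH) (cprod_edges VG EG VH EH)"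
  show "D \<times> VH - {(x, h0)} \<subseteq> VG \<times> VH"
    using dom by (auto simp: dominating_def)
  have "x \<in> D" and pn_x: "pn VG EG x D = {x}"
    using \<open>x \<in> cD VG EG D\<close> by (auto simp: cD_def)
  have "h0 \<in> VH" and "h1 \<in> VH" and "h1 \<noteq> h0"
    using \<open>simple_graph VH EH\<close> \<open>EH h0 h1\<close> by (auto simp: simple_graph_def)
  fix p assume "p \<in> VG \<times> VH"
  then obtain u h where p: "p = (u, h)" "u \<in> VG" "h \<in> VH"
    by blast
  consider "u \<noteq> x" | "u = x" "h \<noteq> h0" | "u = x" "h = h0"
    by blast
  then show "?N p \<inter> (D \<times> VH - {(x, h0)}) \<noteq> {}"
  proof cases
    case 1
    then have "u \<notin> pn VG EG x D"
      using pn_x by blast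
    then have "closed_nbhd VG EG u \<inter> D \<noteq> {x}"
      using p by (simp add: pn_def)
    moreover have "closed_nbhd VG EG u \<inter> D \<noteq> {}"
      using dom p by (simp add: dominating_def)
    ultimately obtain d where "d \<in> closed_nbhd VG EG u" "d \<in> D" "d \<noteq> x"
      by blast
    then have "(d, h) \<in> ?N p \<inter> (D \<times> VH - {(x, h0)})"
      using p by (simp add: closed_nbhd_cprod)
    then show ?thesis
      by blast
  next
    case 2
    then have "p \<in> ?N p \<inter> (D \<times> VH - {(x, h0)})"
      using p \<open>x \<in> D\<close> by (simp add: closed_nbhd_iff)
    then show ?thesis
      by blast
  next
    case 3
    then have "(x, h1) \<in> ?N p \<inter> (D \<times> VH - {(x, h0)})"
      using p \<open>x \<in> D\<close> \<open>h1 \<in> VH\<close> \<open>EH h0 h1\<close> \<open>h1 \<noteq> h0\<close>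
      by (simp add: closed_nbhd_cprod closed_nbhd_iff)
    then show ?thesis
      by blast
  qed
qed

lemma not_well_dominatedI:
  "minimal_dominating V E B \<Longrightarrow> dominating V E S \<Longrightarrow> card S < card B \<Longrightarrow> \<not> well_dominated V E"
  unfolding well_dominated_def minimum_dominating_def by (meson not_le)

theorem proposition18:
  fixes VG :: "'a set" and EG :: "'a \<Rightarrow> 'a \<Rightarrow> bool"
    and VH :: "'b set" and EH :: "'b \<Rightarrow> 'b \<Rightarrow> bool"
    and D :: "'a set"
  assumes "simple_graph VG EG" and "connected_graph VG EG" and "card VG \<ge> 2"
    and "minimum_dominating VG EG D" and "cD VG EG D \<noteq> {}"
    and "simple_graph VH EH" and "connected_graph VH EH" and "card VH \<ge> 2"
  shows "\<not> well_dominated (VG \<times> VH) (cprod_edges VG EG VH EH)"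
proof -
  obtain B where B: "minimum_dominating VG EG B" "external_private_neighbours VG EG B"
    using minimum_dominating_external_private_neighbours[OF assms(1) _ assms(4)]
      connected_graph_has_neighbour[OF assms(2,3)] by blast
  obtain x where "x \<in> cD VG EG D"
    using assms(5) by blast
  obtain h0 h1 where "h0 \<in> VH" and "EH h0 h1"
    using assms(7) connected_graph_has_neighbour[OF assms(7,8)]
    by (metis connected_graph_def ex_in_conv)
  have "dominating VG EG D" and "finite D" and "finite VH"
    using assms(1,4,6) dominating_finite by (auto simp: minimum_dominating_def simple_graph_def)
  have "minimal_dominating (VG \<times> VH) (cprod_edges VG EG VH EH) (B \<times> VH)"
    using B by (simp add: external_private_neighbours_imp_minimal dominating_cprod
        external_private_neighbours_cprod minimum_dominating_def)
  moreover have "dominating (VG \<times> VH) (cprod_edges VG EG VH EH) (D \<times> VH - {(x, h0)})"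
    using \<open>dominating VG EG D\<close> \<open>x \<in> cD VG EG D\<close> assms(6) \<open>EH h0 h1\<close>
    by (rule dominating_cprod_remove_cD)
  moreover have "card (D \<times> VH - {(x, h0)}) < card (B \<times> VH)"
  proof -
    have "card (D \<times> VH - {(x, h0)}) < card (D \<times> VH)"
      using \<open>finite D\<close> \<open>finite VH\<close> \<open>x \<in> cD VG EG D\<close> \<open>h0 \<in> VH\<close>
      by (intro card_Diff1_less) (auto simp: cD_def)
    also have "\<dots> = card (B \<times> VH)"
      using assms(4) B(1) by (simp add: card_cartesian_product minimum_dominating_def le_antisym)
    finally show ?thesis .
  qed
  ultimately show ?thesis
    by (rule not_well_dominatedI)
qed

end
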